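(* Let $T$ be a decision tree of depth $d$ computing a Boolean function $f:\{-1,1\}^n\to\{0,1\}$, and let $p=\Pr_x[f(x)=1]$ for uniform $x\in\{-1,1\}^n$. Then $$\sum_{i=1}^n|\hat f(\{i\})|\ \le\ O\big(\sqrt d\cdot p\cdot\sqrt{\ln(e/p)}\big),$$ where $O(\cdot)$ hides a universal constant.
   Context: Fourier coefficients: $\hat f(S)=\mathbb E_{x}[f(x)\prod_{i\in S}x_i]$ for $x$ uniform on $\{-1,1\}^n$. *)

theory Defs
  imports Complex_Main
begin

text \<open>Points of the Boolean cube {-1,1}^n are represented as bool lists of length n;
  coordinate i (0-based) is +1 if the entry is True and -1 otherwise.\<close>

definition cube :: "nat \<Rightarrow> bool list set" where
  "cube n = {xs. length xs = n}"

definition chi :: "bool list \<Rightarrow> nat \<Rightarrow> real" where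
  "chi xs i = (if xs ! i then 1 else -1)"

definition fourier :: "nat \<Rightarrow> (bool list \<Rightarrow> real) \<Rightarrow> nat set \<Rightarrow> real" where
  "fourier n f S = (\<Sum>x\<in>cube n. f x * (\<Prod>i\<in>S. chi x i)) / 2 ^ n"

datatype dtree = Leaf bool | Node nat dtree dtree

fun dt_eval :: "dtree \<Rightarrow> bool list \<Rightarrow> bool" where
  "dt_eval (Leaf b) x = b"
| "dt_eval (Node i l r) x = (if x ! i then dt_eval r x else dt_eval l x)"

fun dt_depth :: "dtree \<Rightarrow> nat" where
  "dt_depth (Leaf b) = 0"
| "dt_depth (Node i l r) = Suc (max (dt_depth l) (dt_depth r))"

fun dt_vars_below :: "dtree \<Rightarrow> nat \<Rightarrow> bool" where
  "dt_vars_below (Leaf b) n = True"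
| "dt_vars_below (Node i l r) n = (i < n \<and> dt_vars_below l n \<and> dt_vars_below r n)"

definition dt_fun :: "dtree \<Rightarrow> bool list \<Rightarrow> real" where
  "dt_fun T x = of_bool (dt_eval T x)"

definition dt_prob :: "nat \<Rightarrow> dtree \<Rightarrow> real" where
  "dt_prob n T = real (card {x\<in>cube n. dt_eval T x}) / 2 ^ n"

end

theory Submission
  imports Defs
begin

text \<open>Let \<open>A = {x. f x = 1}\<close> and \<open>s\<^sub>i = sgn (hat f {i})\<close>. Flipping a coordinate that \<open>T\<close> does not
  query on the path of \<open>x\<close> changes neither \<open>f x\<close> nor the path, so only queried coordinates survive:
  \<open>\<Sum>\<^sub>i |hat f {i}| = 2\<^sup>-\<^sup>n \<Sum>\<^sub>x\<^sub>\<in>\<^sub>A M x\<close>, where \<open>M x\<close> is the sum of \<open>s\<^sub>i x\<^sub>i\<close> over the variables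
  queried on the path of \<open>x\<close>. Each newly queried variable is a fresh uniform sign, so \<open>M\<close> is a martingale
  with at most \<open>d\<close> steps and \<open>E exp (t M) \<le> cosh t ^ d \<le> exp (d t\<^sup>2 / 2)\<close>. Jensen's inequality on \<open>A\<close>,
  a set of density \<open>p\<close>, gives \<open>t 2\<^sup>-\<^sup>n \<Sum>\<^sub>x\<^sub>\<in>\<^sub>A M x \<le> p (ln (1/p) + d t\<^sup>2 / 2)\<close>, and
  \<open>t = sqrt (ln (e/p) / d)\<close> yields the bound with constant 2.\<close>

lemma two_power_mult_fact_le_fact_double: "(2::real) ^ k * fact k \<le> fact (2 * k)"
proof (induction k)
  case (Suc k)
  have "(2::real) ^ Suc k * fact (Suc k) = (2 * (real k + 1)) * (2 ^ k * fact k)"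
    by (simp add: algebra_simps)
  also have "\<dots> \<le> ((2 * real k + 2) * (2 * real k + 1)) * fact (2 * k)"
    using Suc.IH by (intro mult_mono) auto
  also have "\<dots> = fact (2 * Suc k)"
    by (simp add: algebra_simps)
  finally show ?case .
qed simp

lemma cosh_le_exp_half_square: "cosh (x::real) \<le> exp (x\<^sup>2 / 2)"
proof -
  have exp_sums: "(\<lambda>n. if even n then (x\<^sup>2 / 2) ^ (n div 2) /\<^sub>R fact (n div 2) else 0)
    sums exp (x\<^sup>2 / 2)"
    using sums_if[OF sums_zero exp_converges[of "x\<^sup>2 / 2"]] by simp
  show ?thesis
  proof (rule sums_le[OF _ cosh_converges exp_sums])
    fix n :: nat
    show "(if even n then x ^ n /\<^sub>R fact n else 0)
      \<le> (if even n then (x\<^sup>2 / 2) ^ (n div 2) /\<^sub>R fact (n div 2) else 0)"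
    proof (cases "even n")
      case True
      then obtain k where n: "n = 2 * k" by blast
      have "x ^ n / fact n \<le> (x\<^sup>2) ^ k / (2 ^ k * fact k)"
        unfolding n power_mult using two_power_mult_fact_le_fact_double[of k]
        by (intro divide_left_mono) (auto intro!: mult_pos_pos)
      then show ?thesis
        using n by (simp add: power_divide real_scaleR_def divide_inverse_commute[symmetric] mult.commute
            del: scaleR_conv_of_real)
    qed simp
  qed
qed

lemma cosh_mult_le:
  fixes s t :: real
  assumes "\<bar>s\<bar> \<le> 1"
  shows "cosh (t * s) \<le> cosh t"
proof -
  have "cosh \<bar>t * s\<bar> \<le> cosh \<bar>t\<bar>"
    using assms by (subst cosh_real_nonneg_le_iff) (auto simp: abs_mult mult_left_le)
  then show ?thesis
    by simp
qed

lemma sum_le_card_mult_ln_avg_exp: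
  fixes g :: "'a \<Rightarrow> real"
  assumes "finite A" "A \<noteq> {}"
  shows "(\<Sum>x\<in>A. g x) \<le> card A * ln ((\<Sum>x\<in>A. exp (g x)) / card A)"
proof -
  define c where "c = ln ((\<Sum>x\<in>A. exp (g x)) / card A)"
  have "(\<Sum>x\<in>A. exp (g x)) > 0" "card A > 0"
    using assms by (auto intro: sum_pos simp: card_gt_0_iff)
  then have exp_c: "exp c = (\<Sum>x\<in>A. exp (g x)) / card A"
    unfolding c_def by simp
  have "(\<Sum>x\<in>A. g x - c) \<le> (\<Sum>x\<in>A. exp (g x - c) - 1)"
  proof (rule sum_mono)
    fix x
    show "g x - c \<le> exp (g x - c) - 1"
      using exp_ge_add_one_self[of "g x - c"] by linarith
  qed
  also have "\<dots> = (\<Sum>x\<in>A. exp (g x)) / exp c - card A"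
    by (simp add: exp_diff sum_subtractf sum_divide_distrib)
  also have "\<dots> = 0"
    using \<open>(\<Sum>x\<in>A. exp (g x)) > 0\<close> by (simp add: exp_c)
  finally show ?thesis
    unfolding c_def by (simp add: sum_subtractf)
qed

lemma le_of_forall_tradeoff:
  fixes S p d :: real
  assumes p: "0 < p" "p \<le> 1" and d: "d > 0"
    and tradeoff: "\<And>t. t > 0 \<Longrightarrow> t * S \<le> p * (- ln p + d * t\<^sup>2 / 2)"
  shows "S \<le> 2 * sqrt d * p * sqrt (ln (exp 1 / p))"
proof -
  define L where "L = ln (exp 1 / p)"
  have "ln p \<le> 0"
    using p by simp
  then have L: "L = 1 - ln p" "L \<ge> 1"
    using p by (simp_all add: L_def ln_div)
  define t where "t = sqrt L / sqrt d"
  have t: "t > 0" "d * t\<^sup>2 = L"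
    using d L by (simp_all add: t_def power_divide)
  have "t * S \<le> p * (- ln p + L / 2)"
    using tradeoff[OF t(1)] t(2) by simp
  also have "\<dots> \<le> p * (3/2 * L)"
    using p L by (intro mult_left_mono) linarith+
  finally have "S \<le> 3/2 * p * L / t"
    using t(1) by (simp add: field_simps)
  also have "3/2 * p * L / t = 3/2 * sqrt d * p * sqrt L"
    using d L by (simp add: t_def field_simps real_sqrt_mult[symmetric] real_sqrt_mult_self)
  also have "\<dots> \<le> 2 * sqrt d * p * sqrt L"
    using d p L(2) by (intro mult_right_mono) auto
  finally show ?thesis
    unfolding L_def .
qed

lemma finite_cube [simp]: "finite (cube n)"
  using finite_lists_length_eq[of "UNIV :: bool set" n] by (simp add: cube_def)

lemma card_cube: "card (cube n) = 2 ^ n"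
  using card_lists_length_eq[of "UNIV :: bool set" n] by (simp add: cube_def)

definition flip_coord :: "nat \<Rightarrow> bool list \<Rightarrow> bool list" where
  "flip_coord i x = x[i := \<not> x ! i]"

lemma length_flip_coord [simp]: "length (flip_coord i x) = length x"
  by (simp add: flip_coord_def)

lemma nth_flip_coord: "i < length x \<Longrightarrow> flip_coord i x ! j = (if j = i then \<not> x ! i else x ! j)"
  by (simp add: flip_coord_def)

lemma flip_coord_flip_coord [simp]: "i < length x \<Longrightarrow> flip_coord i (flip_coord i x) = x"
  by (simp add: flip_coord_def)

lemma chi_flip_coord: "i < length x \<Longrightarrow> chi (flip_coord i x) i = - chi x i"
  by (simp add: chi_def flip_coord_def)

fun dt_path_vars :: "dtree \<Rightarrow> bool list \<Rightarrow> nat set" where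
  "dt_path_vars (Leaf b) x = {}"
| "dt_path_vars (Node i l r) x = insert i (dt_path_vars (if x ! i then r else l) x)"

lemma finite_dt_path_vars [simp]: "finite (dt_path_vars T x)"
  by (induction T) auto

lemma dt_path_vars_subset: "dt_vars_below T n \<Longrightarrow> dt_path_vars T x \<subseteq> {..<n}"
  by (induction T) auto

lemma dt_path_vars_depth_0: "dt_depth T = 0 \<Longrightarrow> dt_path_vars T x = {}"
  by (cases T) auto

lemma dt_eval_flip_coord_off_path:
  "i \<notin> dt_path_vars T x \<Longrightarrow> dt_eval T (flip_coord i x) = dt_eval T x"
  by (induction T) (auto simp: flip_coord_def)

lemma dt_path_vars_flip_coord_off_path:
  "i \<notin> dt_path_vars T x \<Longrightarrow> dt_path_vars T (flip_coord i x) = dt_path_vars T x"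
  by (induction T) (auto simp: flip_coord_def)

definition subcube :: "nat \<Rightarrow> nat set \<Rightarrow> (nat \<Rightarrow> bool) \<Rightarrow> bool list set" where
  "subcube n D a = {x \<in> cube n. \<forall>j\<in>D. x ! j = a j}"

lemma finite_subcube [simp]: "finite (subcube n D a)"
  by (simp add: subcube_def)

lemma subcube_empty [simp]: "subcube n {} a = cube n"
  by (simp add: subcube_def)

lemma subcube_insert:
  "i \<notin> D \<Longrightarrow> subcube n (insert i D) (a(i := b)) = {x \<in> subcube n D a. x ! i = b}"
  by (auto simp: subcube_def)

lemma sum_subcube_split:
  assumes "i \<notin> D"
  shows "(\<Sum>x\<in>subcube n D a. f x)
    = (\<Sum>x\<in>subcube n (insert i D) (a(i := True)). f x) + (\<Sum>x\<in>subcube n (insert i D) (a(i := False)). f x)"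
proof -
  have "subcube n (insert i D) (a(i := True)) \<union> subcube n (insert i D) (a(i := False)) = subcube n D a"
    and "subcube n (insert i D) (a(i := True)) \<inter> subcube n (insert i D) (a(i := False)) = {}"
    using assms by (auto simp: subcube_insert)
  then show ?thesis
    using sum.union_disjoint[of "subcube n (insert i D) (a(i := True))"
        "subcube n (insert i D) (a(i := False))" f] by simp
qed

lemma card_subcube_insert_True_eq_False:
  assumes "i < n"
  shows "card (subcube n (insert i D) (a(i := True))) = card (subcube n (insert i D) (a(i := False)))"
proof (rule bij_betw_same_card[of "flip_coord i"], rule bij_betw_byWitness[of _ "flip_coord i"])
  have "flip_coord i x \<in> subcube n (insert i D) (a(i := \<not> b))"
    if "x \<in> subcube n (insert i D) (a(i := b))" for x b
    using that assms by (auto simp: subcube_def cube_def nth_flip_coord)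
  then show "flip_coord i ` subcube n (insert i D) (a(i := True)) \<subseteq> subcube n (insert i D) (a(i := False))"
    and "flip_coord i ` subcube n (insert i D) (a(i := False)) \<subseteq> subcube n (insert i D) (a(i := True))"
    by fastforce+
qed (use assms in \<open>auto simp: subcube_def cube_def\<close>)

lemma card_subcube_eq_double:
  assumes "i < n" "i \<notin> D"
  shows "card (subcube n D a) = 2 * card (subcube n (insert i D) (a(i := b)))"
  using sum_subcube_split[OF assms(2), where f = "\<lambda>_. 1::nat"] card_subcube_insert_True_eq_False[OF assms(1)]
  by (cases b) simp_all

lemma sum_insert_diff:
  assumes "i \<notin> D" "finite P"
  shows "(\<Sum>j\<in>insert i P - D. f j) = f i + (\<Sum>j\<in>P - insert i D. f j)"
proof -
  have "insert i P - D = insert i (P - insert i D)"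
    using assms(1) by auto
  then show ?thesis
    using assms(2) by simp
qed

definition dt_path_sum :: "(nat \<Rightarrow> real) \<Rightarrow> dtree \<Rightarrow> nat set \<Rightarrow> bool list \<Rightarrow> real" where
  "dt_path_sum s T D x = (\<Sum>j\<in>dt_path_vars T x - D. s j * chi x j)"

lemma dt_path_sum_Leaf [simp]: "dt_path_sum s (Leaf b) D x = 0"
  by (simp add: dt_path_sum_def)

lemma dt_path_sum_Node_queried:
  "i \<in> D \<Longrightarrow> dt_path_sum s (Node i L R) D x = dt_path_sum s (if x ! i then R else L) D x"
  by (simp add: dt_path_sum_def)

lemma dt_path_sum_Node_fresh:
  "i \<notin> D \<Longrightarrow>
    dt_path_sum s (Node i L R) D x = s i * chi x i + dt_path_sum s (if x ! i then R else L) (insert i D) x"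
  by (simp add: dt_path_sum_def sum_insert_diff)

text \<open>On a subcube where \<open>x\<^sub>i\<close> is still free, the query of \<open>x\<^sub>i\<close> splits it into two halves of equal size
  on which \<open>s\<^sub>i x\<^sub>i = \<plusminus>s\<^sub>i\<close>; this contributes the factor \<open>cosh (t s\<^sub>i) \<le> cosh t\<close>.\<close>

lemma sum_exp_dt_path_sum_Node_fresh_le:
  fixes c t :: real
  assumes "i < n" "i \<notin> D" "\<bar>s i\<bar> \<le> 1" "c \<ge> 0"
    and children: "\<And>b D' a'. (\<Sum>x\<in>subcube n D' a'. exp (t * dt_path_sum s (if b then R else L) D' x))
      \<le> card (subcube n D' a') * c"
  shows "(\<Sum>x\<in>subcube n D a. exp (t * dt_path_sum s (Node i L R) D x))
    \<le> card (subcube n D a) * (cosh t * c)"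
proof -
  let ?H = "\<lambda>b. subcube n (insert i D) (a(i := b))"
  define e where "e b = exp (t * s i * (if b then 1 else -1))" for b
  have half: "(\<Sum>x\<in>?H b. exp (t * dt_path_sum s (Node i L R) D x)) \<le> e b * (card (?H b) * c)" for b
  proof -
    have "exp (t * dt_path_sum s (Node i L R) D x) = e b * exp (t * dt_path_sum s (if b then R else L) (insert i D) x)"
      if "x \<in> ?H b" for x
      using that assms(2) by (auto simp: dt_path_sum_Node_fresh subcube_def chi_def e_def
          distrib_left mult.assoc simp flip: exp_add)
    then have "(\<Sum>x\<in>?H b. exp (t * dt_path_sum s (Node i L R) D x))
        = e b * (\<Sum>x\<in>?H b. exp (t * dt_path_sum s (if b then R else L) (insert i D) x))"
      by (simp add: sum_distrib_left)
    also have "\<dots> \<le> e b * (card (?H b) * c)"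
      using children by (simp add: e_def)
    finally show ?thesis .
  qed
  have "(\<Sum>x\<in>subcube n D a. exp (t * dt_path_sum s (Node i L R) D x))
      = (\<Sum>x\<in>?H True. exp (t * dt_path_sum s (Node i L R) D x))
        + (\<Sum>x\<in>?H False. exp (t * dt_path_sum s (Node i L R) D x))"
    by (rule sum_subcube_split[OF assms(2)])
  also have "\<dots> \<le> (e True + e False) * (card (?H True) * c)"
    using add_mono[OF half[of True] half[of False]] card_subcube_insert_True_eq_False[OF assms(1)]
    by (simp add: distrib_right)
  also have "\<dots> \<le> 2 * cosh t * (card (?H True) * c)"
    using cosh_mult_le[OF assms(3), of t] assms(4)
    by (intro mult_right_mono) (simp_all add: e_def cosh_def)
  also have "\<dots> = card (subcube n D a) * (cosh t * c)"
    unfolding card_subcube_eq_double[OF assms(1,2), of a True] by simp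
  finally show ?thesis .
qed

lemma sum_exp_dt_path_sum_Node_le:
  fixes c t :: real
  assumes "i < n" "\<bar>s i\<bar> \<le> 1" "c \<ge> 0"
    and children: "\<And>b D' a'. (\<Sum>x\<in>subcube n D' a'. exp (t * dt_path_sum s (if b then R else L) D' x))
      \<le> card (subcube n D' a') * c"
  shows "(\<Sum>x\<in>subcube n D a. exp (t * dt_path_sum s (Node i L R) D x))
    \<le> card (subcube n D a) * (cosh t * c)"
proof (cases "i \<in> D")
  case True
  then have "(\<Sum>x\<in>subcube n D a. exp (t * dt_path_sum s (Node i L R) D x))
      = (\<Sum>x\<in>subcube n D a. exp (t * dt_path_sum s (if a i then R else L) D x))"
    by (intro sum.cong) (auto simp: dt_path_sum_Node_queried subcube_def)
  also have "\<dots> \<le> card (subcube n D a) * c"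
    by (rule children)
  also have "\<dots> \<le> card (subcube n D a) * (cosh t * c)"
    using mult_right_mono[OF cosh_real_ge_1 assms(3)] by (intro mult_left_mono) auto
  finally show ?thesis .
next
  case False
  then show ?thesis
    by (rule sum_exp_dt_path_sum_Node_fresh_le[OF assms(1) _ assms(2-3) children])
qed

lemma sum_exp_dt_path_sum_subcube_le:
  assumes "dt_vars_below T n" "\<And>i. \<bar>s i\<bar> \<le> 1"
  shows "(\<Sum>x\<in>subcube n D a. exp (t * dt_path_sum s T D x)) \<le> card (subcube n D a) * cosh t ^ dt_depth T"
  using assms(1)
proof (induction T arbitrary: D a)
  case (Node i L R)
  define k where "k = max (dt_depth L) (dt_depth R)"
  have "(\<Sum>x\<in>subcube n D' a'. exp (t * dt_path_sum s (if b then R else L) D' x))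
      \<le> card (subcube n D' a') * cosh t ^ k" for b D' a'
  proof -
    have "(\<Sum>x\<in>subcube n D' a'. exp (t * dt_path_sum s (if b then R else L) D' x))
        \<le> card (subcube n D' a') * cosh t ^ dt_depth (if b then R else L)"
      using Node.IH Node.prems by auto
    also have "\<dots> \<le> card (subcube n D' a') * cosh t ^ k"
      using cosh_real_ge_1 by (intro mult_left_mono power_increasing) (auto simp: k_def)
    finally show ?thesis .
  qed
  then show ?case
    using sum_exp_dt_path_sum_Node_le[of i n s "cosh t ^ k"] Node.prems assms(2) by (simp add: k_def)
qed simp

lemma sum_exp_dt_path_sum_le:
  assumes "dt_vars_below T n" "\<And>i. \<bar>s i\<bar> \<le> 1"
  shows "(\<Sum>x\<in>cube n. exp (t * dt_path_sum s T {} x)) \<le> 2 ^ n * cosh t ^ dt_depth T"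
  using sum_exp_dt_path_sum_subcube_le[OF assms, where D = "{}"] by (simp add: card_cube)

lemma fourier_dt_fun_singleton:
  "fourier n (dt_fun T) {i} = (\<Sum>x\<in>{x \<in> cube n. dt_eval T x}. chi x i) / 2 ^ n"
proof -
  have "(\<Sum>x\<in>cube n. dt_fun T x * (\<Prod>j\<in>{i}. chi x j)) = (\<Sum>x\<in>cube n. if dt_eval T x then chi x i else 0)"
    by (intro sum.cong) (simp_all add: dt_fun_def)
  also have "\<dots> = (\<Sum>x\<in>{x \<in> cube n. dt_eval T x}. chi x i)"
    by (rule sum.inter_filter[symmetric]) simp
  finally show ?thesis
    by (simp add: fourier_def)
qed

lemma sum_chi_off_path_eq_0:
  assumes "i < n"
  shows "(\<Sum>x\<in>{x \<in> cube n. dt_eval T x \<and> i \<notin> dt_path_vars T x}. chi x i) = 0"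
proof -
  define B where "B = {x \<in> cube n. dt_eval T x \<and> i \<notin> dt_path_vars T x}"
  have "(\<Sum>x\<in>B. chi x i) = (\<Sum>x\<in>B. chi (flip_coord i x) i)"
    using assms
    by (intro sum.reindex_bij_witness[of B "flip_coord i" "flip_coord i"])
      (auto simp: B_def cube_def dt_eval_flip_coord_off_path dt_path_vars_flip_coord_off_path)
  also have "\<dots> = - (\<Sum>x\<in>B. chi x i)"
    using assms by (simp add: B_def cube_def chi_flip_coord sum_negf)
  finally show ?thesis
    unfolding B_def by simp
qed

lemma sum_mult_fourier_singleton_eq:
  assumes "dt_vars_below T n"
  shows "(\<Sum>i<n. s i * fourier n (dt_fun T) {i})
    = (\<Sum>x\<in>{x \<in> cube n. dt_eval T x}. dt_path_sum s T {} x) / 2 ^ n"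
proof -
  define A where "A = {x \<in> cube n. dt_eval T x}"
  have on_path: "(\<Sum>x\<in>A. chi x i) = (\<Sum>x\<in>{x \<in> A. i \<in> dt_path_vars T x}. chi x i)" if "i < n" for i
  proof -
    let ?off = "{x \<in> cube n. dt_eval T x \<and> i \<notin> dt_path_vars T x}"
    have parts: "{x \<in> A. i \<in> dt_path_vars T x} \<union> ?off = A" "{x \<in> A. i \<in> dt_path_vars T x} \<inter> ?off = {}"
      by (auto simp: A_def)
    have "(\<Sum>x\<in>{x \<in> A. i \<in> dt_path_vars T x} \<union> ?off. chi x i)
        = (\<Sum>x\<in>{x \<in> A. i \<in> dt_path_vars T x}. chi x i) + (\<Sum>x\<in>?off. chi x i)"
      by (rule sum.union_disjoint) (auto simp: A_def)
    then show ?thesis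
      by (simp only: parts(1) sum_chi_off_path_eq_0[OF that] add_0_right)
  qed
  have "(\<Sum>i<n. s i * (\<Sum>x\<in>A. chi x i)) = (\<Sum>i<n. \<Sum>x\<in>{x \<in> A. i \<in> dt_path_vars T x}. s i * chi x i)"
    using on_path by (simp add: sum_distrib_left)
  also have "\<dots> = (\<Sum>x\<in>A. \<Sum>i\<in>{i \<in> {..<n}. i \<in> dt_path_vars T x}. s i * chi x i)"
    by (rule sum.swap_restrict) (simp_all add: A_def)
  also have "\<dots> = (\<Sum>x\<in>A. dt_path_sum s T {} x)"
    using dt_path_vars_subset[OF assms] by (intro sum.cong) (auto simp: dt_path_sum_def intro!: sum.cong)
  finally show ?thesis
    by (simp add: fourier_dt_fun_singleton A_def flip: sum_divide_distrib)
qed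

lemma sum_abs_fourier_singleton_eq:
  assumes "dt_vars_below T n"
  shows "(\<Sum>i<n. \<bar>fourier n (dt_fun T) {i}\<bar>)
    = (\<Sum>x\<in>{x \<in> cube n. dt_eval T x}. dt_path_sum (\<lambda>i. sgn (fourier n (dt_fun T) {i})) T {} x) / 2 ^ n"
  using sum_mult_fourier_singleton_eq[OF assms, of "\<lambda>i. sgn (fourier n (dt_fun T) {i})"]
  by (simp add: abs_sgn mult.commute)

lemma dt_prob_le_1: "dt_prob n T \<le> 1"
proof -
  have "card {x \<in> cube n. dt_eval T x} \<le> card (cube n)"
    by (intro card_mono) auto
  then show ?thesis
    by (simp add: dt_prob_def card_cube)
qed

lemma sum_abs_fourier_singleton_eq_0:
  assumes "dt_vars_below T n" "dt_depth T = 0 \<or> dt_prob n T = 0"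
  shows "(\<Sum>i<n. \<bar>fourier n (dt_fun T) {i}\<bar>) = 0"
proof -
  let ?s = "\<lambda>i. sgn (fourier n (dt_fun T) {i})"
  have "(\<Sum>x\<in>{x \<in> cube n. dt_eval T x}. dt_path_sum ?s T {} x) = 0"
  proof (cases "dt_depth T = 0")
    case True
    then show ?thesis
      by (simp add: dt_path_sum_def dt_path_vars_depth_0)
  next
    case False
    then have "{x \<in> cube n. dt_eval T x} = {}"
      using assms(2) by (simp add: dt_prob_def)
    then show ?thesis
      by (simp only: sum.empty)
  qed
  then show ?thesis
    by (simp add: sum_abs_fourier_singleton_eq[OF assms(1)])
qed

lemma mult_sum_abs_fourier_singleton_le:
  fixes t :: real
  assumes "dt_vars_below T n" "dt_prob n T > 0" "t > 0"
  shows "t * (\<Sum>i<n. \<bar>fourier n (dt_fun T) {i}\<bar>)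
    \<le> dt_prob n T * (- ln (dt_prob n T) + dt_depth T * t\<^sup>2 / 2)"
proof -
  define A where "A = {x \<in> cube n. dt_eval T x}"
  define M where "M = dt_path_sum (\<lambda>i. sgn (fourier n (dt_fun T) {i})) T {}"
  have p: "dt_prob n T = card A / 2 ^ n"
    by (simp add: A_def dt_prob_def)
  then have "card A > 0"
    using assms(2) by (simp add: zero_less_divide_iff)
  then have A: "finite A" "A \<noteq> {}"
    by (auto simp: card_gt_0_iff)
  have "(\<Sum>x\<in>A. exp (t * M x)) \<le> (\<Sum>x\<in>cube n. exp (t * M x))"
    by (rule sum_mono2) (auto simp: A_def)
  also have "\<dots> \<le> 2 ^ n * cosh t ^ dt_depth T"
    unfolding M_def by (rule sum_exp_dt_path_sum_le[OF assms(1)]) (simp add: abs_sgn_eq)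
  finally have moment: "(\<Sum>x\<in>A. exp (t * M x)) \<le> 2 ^ n * cosh t ^ dt_depth T" .
  have "(\<Sum>x\<in>A. t * M x) \<le> card A * ln ((\<Sum>x\<in>A. exp (t * M x)) / card A)"
    by (rule sum_le_card_mult_ln_avg_exp[OF A])
  also have "\<dots> \<le> card A * ln (2 ^ n * cosh t ^ dt_depth T / card A)"
    using moment A \<open>card A > 0\<close> by (intro mult_left_mono ln_mono divide_right_mono divide_pos_pos sum_pos) auto
  also have "\<dots> = card A * (- ln (dt_prob n T) + dt_depth T * ln (cosh t))"
    using A by (simp add: p ln_div ln_mult ln_realpow)
  also have "\<dots> \<le> card A * (- ln (dt_prob n T) + dt_depth T * (t\<^sup>2 / 2))"
    using ln_mono[OF cosh_le_exp_half_square cosh_real_pos, of t] by (intro mult_left_mono add_left_mono) auto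
  finally have bound: "(\<Sum>x\<in>A. t * M x) \<le> card A * (- ln (dt_prob n T) + dt_depth T * (t\<^sup>2 / 2))" .
  have "t * (\<Sum>i<n. \<bar>fourier n (dt_fun T) {i}\<bar>) = (\<Sum>x\<in>A. t * M x) / 2 ^ n"
    by (simp add: sum_abs_fourier_singleton_eq[OF assms(1)] A_def M_def sum_distrib_left)
  also have "\<dots> \<le> card A * (- ln (dt_prob n T) + dt_depth T * (t\<^sup>2 / 2)) / 2 ^ n"
    by (rule divide_right_mono[OF bound]) simp
  also have "\<dots> = dt_prob n T * (- ln (dt_prob n T) + dt_depth T * t\<^sup>2 / 2)"
    unfolding p by simp
  finally show ?thesis .
qed

theorem mainTheorem6:
  "\<exists>C>0. \<forall>(n::nat) (T::dtree) (d::nat).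
     dt_vars_below T n \<longrightarrow> dt_depth T = d \<longrightarrow>
     (\<Sum>i<n. \<bar>fourier n (dt_fun T) {i}\<bar>)
       \<le> C * sqrt (real d) * dt_prob n T * sqrt (ln (exp 1 / dt_prob n T))"
proof (intro exI[of _ 2] conjI allI impI)
  fix n T d
  assume vars: "dt_vars_below T n" and depth: "dt_depth T = d"
  show "(\<Sum>i<n. \<bar>fourier n (dt_fun T) {i}\<bar>)
    \<le> 2 * sqrt (real d) * dt_prob n T * sqrt (ln (exp 1 / dt_prob n T))"
  proof (cases "d = 0 \<or> dt_prob n T = 0")
    case True
    then have "(\<Sum>i<n. \<bar>fourier n (dt_fun T) {i}\<bar>) = 0"
      using sum_abs_fourier_singleton_eq_0[OF vars] depth by blast
    with True show ?thesis
      by auto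
  next
    case False
    moreover have "dt_prob n T \<ge> 0"
      by (simp add: dt_prob_def)
    ultimately have p_pos: "dt_prob n T > 0" and d_pos: "real d > 0"
      by auto
    have "t * (\<Sum>i<n. \<bar>fourier n (dt_fun T) {i}\<bar>)
        \<le> dt_prob n T * (- ln (dt_prob n T) + real d * t\<^sup>2 / 2)" if "t > 0" for t
      using mult_sum_abs_fourier_singleton_le[OF vars p_pos that] depth by simp
    then show ?thesis
      by (rule le_of_forall_tradeoff[OF p_pos dt_prob_le_1 d_pos])
  qed
qed simp

end
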